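(* Let $\pi>0$, $\bar d>0$, $0<\theta_1<\dots<\theta_K$, $0\le\beta_1<\dots<\beta_M\le1$, and let $A:[0,D]\to[0,\bar d]$ be differentiable with $A'(Q)<0$ on $[0,D]$. Enumerate the $KM$ types $(\beta_m,\theta_k)$ as $\Lambda_1,\dots,\Lambda_{KM}$ and write $L(Q,\beta,\theta)=\theta[\bar d-\beta A(Q)]-\pi(1-\beta)A(Q)$ and $\bar S(Q,\Pi,\Lambda)=L(Q,\Lambda)-\Pi$. Let $\Phi=\{\phi_i=(Q_i,\Pi_i)\}_{i=1}^{KM}$, $Q_i\in[0,D]$, $\Pi_i\in\mathbb{R}$, be a feasible contract, i.e. $\bar S(Q_i,\Pi_i,\Lambda_i)\ge0$ for all $i$ (individual rationality) and $\bar S(Q_i,\Pi_i,\Lambda_i)\ge\bar S(Q_j,\Pi_j,\Lambda_i)$ for all $i\neq j$ (incentive compatibility). Then for all $i,j$: $Q_i<Q_j$ if and only if $\Pi_i<\Pi_j$.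
   Context: Model: an operator offers a contract consisting of one item (data cap $Q_i$, monthly subscription fee $\Pi_i$) intended for each user type $\Lambda_i$. $\pi$ is the overage price, $\bar d$ the mean demand, $A(Q)$ the expected overage consumption under cap $Q$ (decreasing, convex). $L$ is the user's virtual payoff (payoff before the subscription fee), $\bar S$ his expected payoff. *)

theory Defs
  imports Complex_Main
begin

definition Lpay :: "real \<Rightarrow> real \<Rightarrow> (real \<Rightarrow> real) \<Rightarrow> real \<Rightarrow> real \<Rightarrow> real \<Rightarrow> real" where
  "Lpay pr dbar A Q b th = th * (dbar - b * A Q) - pr * (1 - b) * A Q"

definition Sbar :: "real \<Rightarrow> real \<Rightarrow> (real \<Rightarrow> real) \<Rightarrow> real \<Rightarrow> real \<Rightarrow> real \<Rightarrow> real \<Rightarrow> real" where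
  "Sbar pr dbar A Q P b th = Lpay pr dbar A Q b th - P"

end

theory Submission
  imports Defs
begin

text \<open>Against each other type's contract, incentive compatibility says that moving from cap
  \<open>Q\<close> to cap \<open>Q'\<close> is worth at most the fee difference; the virtual payoff changes by the
  positive marginal weight \<open>\<beta> \<theta> + \<pi> (1 - \<beta>)\<close> times \<open>A Q - A Q'\<close>. Since \<open>A\<close> is strictly
  decreasing, a larger cap is worth strictly more to every type, so the two incentive
  constraints between any two contracts force caps and fees to be ordered alike.\<close>

lemma strict_antimono_on_Icc_if_deriv_neg:
  fixes f :: "real \<Rightarrow> real"
  assumes deriv: "\<forall>q\<in>{a..b}. \<exists>f'. (f has_real_derivative f') (at q within {a..b}) \<and> f' < 0"
    and "a \<le> x" "x < y" "y \<le> b"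
  shows "f y < f x"
proof (rule DERIV_neg_imp_decreasing_open[OF \<open>x < y\<close>])
  fix z assume "x < z" "z < y"
  then have "at z within {a..b} = at z"
    using assms by (intro at_within_Icc_at) auto
  with deriv \<open>x < z\<close> \<open>z < y\<close> assms show "\<exists>d. (f has_real_derivative d) (at z) \<and> d < 0"
    by (metis atLeastAtMost_iff less_imp_le order_trans)
next
  have "continuous_on {a..b} f"
    unfolding continuous_on_eq_continuous_within using deriv DERIV_continuous by blast
  then show "continuous_on {x..y} f"
    by (rule continuous_on_subset) (use assms in auto)
qed

lemma Sbar_diff:
  "Sbar pr dbar A Q' P' b th - Sbar pr dbar A Q P b th
     = (b * th + pr * (1 - b)) * (A Q - A Q') - (P' - P)"
  by (simp add: Sbar_def Lpay_def algebra_simps)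

lemma marginal_weight_pos:
  fixes pr b th :: real
  assumes "pr > 0" "0 \<le> b" "b \<le> 1" "th > 0"
  shows "b * th + pr * (1 - b) > 0"
proof -
  have "b * th \<ge> 0" "pr * (1 - b) \<ge> 0"
    using assms by simp_all
  moreover have "b * th > 0 \<or> pr * (1 - b) > 0"
    using assms by (cases "b = 0") simp_all
  ultimately show ?thesis by linarith
qed

lemma IC_pair_caps_fees_same_order:
  fixes A :: "real \<Rightarrow> real"
  assumes A_dec: "\<And>x y. x \<in> {Q1, Q2} \<Longrightarrow> y \<in> {Q1, Q2} \<Longrightarrow> x < y \<Longrightarrow> A y < A x"
    and weight1: "b1 * th1 + pr * (1 - b1) > 0"
    and weight2: "b2 * th2 + pr * (1 - b2) > 0"
    and IC1: "Sbar pr dbar A Q1 P1 b1 th1 \<ge> Sbar pr dbar A Q2 P2 b1 th1"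
    and IC2: "Sbar pr dbar A Q2 P2 b2 th2 \<ge> Sbar pr dbar A Q1 P1 b2 th2"
  shows "Q1 < Q2 \<longleftrightarrow> P1 < P2"
proof
  assume "Q1 < Q2"
  then have "A Q2 < A Q1" using A_dec by simp
  then have "(b1 * th1 + pr * (1 - b1)) * (A Q1 - A Q2) > 0"
    using weight1 by simp
  then show "P1 < P2"
    using IC1 Sbar_diff[of pr dbar A Q2 P2 b1 th1 Q1 P1] by linarith
next
  assume "P1 < P2"
  show "Q1 < Q2"
  proof (rule ccontr)
    assume "\<not> Q1 < Q2"
    then have "A Q1 \<le> A Q2" using A_dec[of Q2 Q1] by (cases "Q1 = Q2") auto
    then have "(b2 * th2 + pr * (1 - b2)) * (A Q2 - A Q1) \<ge> 0"
      using weight2 by simp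
    then show False
      using IC2 \<open>P1 < P2\<close> Sbar_diff[of pr dbar A Q1 P1 b2 th2 Q2 P2] by linarith
  qed
qed

lemma strict_mono_on_bounds:
  fixes f :: "nat \<Rightarrow> real"
  assumes "strict_mono_on {1..n} f" "k \<in> {1..n}"
  shows "f 1 \<le> f k" "f k \<le> f n"
  using assms by (auto intro: strict_mono_on_leD)

theorem lemma3:
  fixes pr dbar D :: real and K M :: nat
    and \<theta> \<beta> :: "nat \<Rightarrow> real" and A :: "real \<Rightarrow> real"
    and lam :: "nat \<Rightarrow> nat \<times> nat" and Q P :: "nat \<Rightarrow> real"
  assumes pr_pos: "pr > 0" and dbar_pos: "dbar > 0"
    and theta_pos: "\<theta> 1 > 0" and theta_mono: "strict_mono_on {1..K} \<theta>"
    and beta_nonneg: "\<beta> 1 \<ge> 0" and beta_le1: "\<beta> M \<le> 1" and beta_mono: "strict_mono_on {1..M} \<beta>"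
    and A_range: "\<forall>q\<in>{0..D}. A q \<in> {0..dbar}"
    and A_deriv: "\<forall>q\<in>{0..D}. \<exists>A'. (A has_real_derivative A') (at q within {0..D}) \<and> A' < 0"
    and enum: "bij_betw lam {1..K*M} ({1..M} \<times> {1..K})"
    and Q_range: "\<forall>i\<in>{1..K*M}. Q i \<in> {0..D}"
    and IR: "\<forall>i\<in>{1..K*M}. Sbar pr dbar A (Q i) (P i) (\<beta> (fst (lam i))) (\<theta> (snd (lam i))) \<ge> 0"
    and IC: "\<forall>i\<in>{1..K*M}. \<forall>j\<in>{1..K*M}. i \<noteq> j \<longrightarrow>
              Sbar pr dbar A (Q i) (P i) (\<beta> (fst (lam i))) (\<theta> (snd (lam i)))
              \<ge> Sbar pr dbar A (Q j) (P j) (\<beta> (fst (lam i))) (\<theta> (snd (lam i)))"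
  shows "\<forall>i\<in>{1..K*M}. \<forall>j\<in>{1..K*M}. (Q i < Q j \<longleftrightarrow> P i < P j)"
proof (intro ballI)
  fix i j assume i: "i \<in> {1..K*M}" and j: "j \<in> {1..K*M}"
  have weight_pos: "\<beta> (fst (lam k)) * \<theta> (snd (lam k)) + pr * (1 - \<beta> (fst (lam k))) > 0"
    if "k \<in> {1..K*M}" for k
  proof -
    have "fst (lam k) \<in> {1..M}" "snd (lam k) \<in> {1..K}"
      using bij_betw_apply[OF enum that] by auto
    then show ?thesis
      using strict_mono_on_bounds[OF beta_mono] strict_mono_on_bounds[OF theta_mono]
        beta_nonneg beta_le1 theta_pos pr_pos
      by (intro marginal_weight_pos) fastforce+
  qed
  have A_dec: "A y < A x" if "x \<in> {Q i, Q j}" "y \<in> {Q i, Q j}" "x < y" for x y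
    using that Q_range i j by (intro strict_antimono_on_Icc_if_deriv_neg[OF A_deriv]) auto
  show "Q i < Q j \<longleftrightarrow> P i < P j"
  proof (cases "i = j")
    case False
    then show ?thesis
      using IC i j
      by (intro IC_pair_caps_fees_same_order[where dbar = dbar,
            OF A_dec weight_pos[OF i] weight_pos[OF j]]) auto
  qed simp
qed

end
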